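(* Let $G(V,E)$ be a graph with nonnegative edge weights $w$, let $\pi$ be a permutation of $E$ in non-increasing order of weight, and let $G^{(1)},\ldots,G^{(k)}$ be subgraphs of $G$ on vertex set $V$ (e.g. an outcome of a random $k$-clustering). For $i\in[k]$ let $M_i:=\mathsf{Greedy}(G^{(i)},\pi)$ and let $H$ be the graph on $V$ with edge set $\bigcup_{i} M_i$. Fix a maximum weight matching $M^*$ of $G$. Call $e\in M^*$ free for machine $1$ if no endpoint of $e$ is matched by $\mathsf{Greedy}(G^{(1)},\pi^{<e})$, and blocked otherwise; let $F_1$ and $B_1$ be the sets of free and blocked edges of $M^*$ for machine $1$, and let $F'_1:=F_1\cap E(H)$. Then $$\mathrm{opt}(H) \geq \frac12\left(w(F'_1)+w(B_1)\right).$$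
   Context: $\mathrm{opt}(H)$ is the weight of a maximum weight matching of $H$; $w(S)$ is the total weight of an edge set $S$. $\mathsf{Greedy}(G,\pi)$ scans the edges of $G$ in the order $\pi$ (restricted to the edges of $G$) and adds an edge $(u,v)$ iff neither endpoint is already matched. $\pi^{<e}$ is the set of edges preceding $e$ in $\pi$, and $\mathsf{Greedy}(G^{(1)},\pi^{<e})$ means running $\mathsf{Greedy}(G^{(1)},\pi)$ and stopping just before processing $e$. Whether $e$ is free or blocked does not depend on whether $e$ belongs to $G^{(1)}$. *)

theory Defs
  imports Complex_Main
begin

definition is_graph :: "'v set \<Rightarrow> 'v set set \<Rightarrow> bool" where
  "is_graph V E \<longleftrightarrow> finite V \<and> (\<forall>e\<in>E. card e = 2 \<and> e \<subseteq> V)"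

definition matching :: "'v set set \<Rightarrow> bool" where
  "matching M \<longleftrightarrow> (\<forall>e1\<in>M. \<forall>e2\<in>M. e1 \<noteq> e2 \<longrightarrow> e1 \<inter> e2 = {})"

definition opt :: "('v set \<Rightarrow> real) \<Rightarrow> 'v set set \<Rightarrow> real" where
  "opt w EH = Max ((\<lambda>M. sum w M) ` {M. M \<subseteq> EH \<and> matching M})"

definition max_weight_matching :: "('v set \<Rightarrow> real) \<Rightarrow> 'v set set \<Rightarrow> 'v set set \<Rightarrow> bool" where
  "max_weight_matching w E M \<longleftrightarrow> M \<subseteq> E \<and> matching M \<and>
     (\<forall>M'. M' \<subseteq> E \<and> matching M' \<longrightarrow> sum w M' \<le> sum w M)"

fun greedy_aux :: "'v set set \<Rightarrow> 'v set list \<Rightarrow> 'v set set \<Rightarrow> 'v set set" where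
  "greedy_aux Ei [] M = M"
| "greedy_aux Ei (e # es) M =
     (if e \<in> Ei \<and> (\<forall>u\<in>e. u \<notin> \<Union>M) then greedy_aux Ei es (insert e M)
      else greedy_aux Ei es M)"

definition greedy :: "'v set set \<Rightarrow> 'v set list \<Rightarrow> 'v set set" where
  "greedy Ei \<pi> = greedy_aux Ei \<pi> {}"

definition prefix_before :: "'v set list \<Rightarrow> 'v set \<Rightarrow> 'v set list" where
  "prefix_before \<pi> e = takeWhile (\<lambda>x. x \<noteq> e) \<pi>"

end

theory Submission
  imports Defs
begin

text \<open>Machine 1's greedy matching \<open>M\<^sub>1\<close> lies in \<open>H\<close>, and so does the matching formed by
  \<open>F'\<^sub>1\<close> together with the edges of \<open>M\<^sub>1\<close> avoiding \<open>F'\<^sub>1\<close>; each has weight at most \<open>opt(H)\<close>.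
  A blocked edge \<open>e\<close> meets an edge of \<open>M\<^sub>1\<close> taken before it, hence at least as heavy, and we
  charge \<open>e\<close> to it. As \<open>M\<^sup>*\<close> is a matching, an edge of \<open>M\<^sub>1\<close> is charged at most twice, and at
  most once if it meets an edge of \<open>F'\<^sub>1\<close>, which occupies one of its two endpoints without being
  blocked. So \<open>w(B\<^sub>1)\<close> is bounded by the sum of the two weights above.\<close>

definition free_edges :: "'v set set \<Rightarrow> 'v set list \<Rightarrow> 'v set set \<Rightarrow> 'v set set" where
  "free_edges Ei \<pi> M = {e\<in>M. e \<inter> \<Union>(greedy Ei (prefix_before \<pi> e)) = {}}"

lemma finite_edges: "is_graph V E \<Longrightarrow> finite E"
  unfolding is_graph_def by (meson Pow_iff finite_Pow_iff finite_subset subsetI)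

lemma sum_le_opt:
  assumes "finite EH" "N \<subseteq> EH" "matching N"
  shows "sum w N \<le> opt w EH"
  unfolding opt_def using assms by (intro Max_ge) auto

lemma greedy_aux_mono: "M \<subseteq> greedy_aux Ei xs M"
  by (induction xs arbitrary: M) (auto, blast)

lemma greedy_aux_append: "greedy_aux Ei (xs @ ys) M = greedy_aux Ei ys (greedy_aux Ei xs M)"
  by (induction xs arbitrary: M) auto

lemma greedy_aux_subset: "greedy_aux Ei xs M \<subseteq> M \<union> (Ei \<inter> set xs)"
proof (induction xs arbitrary: M)
  case (Cons a xs)
  show ?case using Cons[of "insert a M"] Cons[of M] by auto
qed simp

lemma matching_greedy_aux: "matching M \<Longrightarrow> matching (greedy_aux Ei xs M)"
proof (induction xs arbitrary: M)
  case (Cons a xs)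
  have "matching (insert a M)" if "\<forall>u\<in>a. u \<notin> \<Union>M"
    using Cons.prems that unfolding matching_def by blast
  then show ?case using Cons by auto
qed simp

lemma greedy_subset: "greedy Ei xs \<subseteq> Ei \<inter> set xs"
  unfolding greedy_def using greedy_aux_subset by fastforce

lemma matching_greedy: "matching (greedy Ei xs)"
  unfolding greedy_def by (rule matching_greedy_aux) (simp add: matching_def)

lemma greedy_prefix_before_subset: "greedy Ei (prefix_before \<pi> e) \<subseteq> greedy Ei \<pi>"
  using greedy_aux_mono greedy_aux_append[of Ei "prefix_before \<pi> e" "dropWhile (\<lambda>x. x \<noteq> e) \<pi>"]
  unfolding greedy_def prefix_before_def by simp

lemma sorted_wrt_takeWhile_neq:
  assumes "sorted_wrt R xs" "x \<in> set (takeWhile (\<lambda>y. y \<noteq> e) xs)" "e \<in> set xs"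
  shows "R x e"
proof -
  let ?ys = "takeWhile (\<lambda>y. y \<noteq> e) xs" and ?zs = "dropWhile (\<lambda>y. y \<noteq> e) xs"
  have "e \<notin> set ?ys" by (auto dest: set_takeWhileD)
  then have "e \<in> set ?zs"
    using assms(3) takeWhile_dropWhile_id[of "\<lambda>y. y \<noteq> e" xs] by (metis Un_iff set_append)
  then show ?thesis using assms(1,2) sorted_wrt_append[of R ?ys ?zs] by simp
qed

lemma blocking_edge:
  assumes "sorted_wrt (\<lambda>a b. w a \<ge> w b) \<pi>" "e \<in> set \<pi>" "e \<in> M - free_edges Ei \<pi> M"
  obtains f where "f \<in> greedy Ei \<pi>" "e \<inter> f \<noteq> {}" "w e \<le> w f"
proof -
  obtain f where f: "f \<in> greedy Ei (prefix_before \<pi> e)" "e \<inter> f \<noteq> {}"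
    using assms(3) unfolding free_edges_def by blast
  have "f \<in> set (prefix_before \<pi> e)" using f(1) greedy_subset by blast
  then have "w e \<le> w f"
    using sorted_wrt_takeWhile_neq[OF assms(1) _ assms(2)] unfolding prefix_before_def by blast
  then show thesis using that f greedy_prefix_before_subset by blast
qed

lemma card_matching_meeting_le:
  assumes "matching M" "finite f"
  shows "card {e\<in>M. e \<inter> f \<noteq> {}} \<le> card f"
proof -
  let ?S = "{e\<in>M. e \<inter> f \<noteq> {}}"
  define pick where "pick e = (SOME u. u \<in> e \<inter> f)" for e
  have pick: "pick e \<in> e \<inter> f" if "e \<in> ?S" for e
    using that someI_ex[of "\<lambda>u. u \<in> e \<inter> f"] unfolding pick_def by blast
  have "inj_on pick ?S"
  proof (rule inj_onI)
    fix x y assume "x \<in> ?S" "y \<in> ?S" "pick x = pick y"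
    then have "x \<inter> y \<noteq> {}" using pick by (metis IntD1 disjoint_iff)
    then show "x = y" using \<open>x \<in> ?S\<close> \<open>y \<in> ?S\<close> assms(1) unfolding matching_def by blast
  qed
  then show ?thesis using pick assms(2) by (intro card_inj_on_le) auto
qed

lemma sum_le_by_charging:
  fixes w :: "'a \<Rightarrow> real" and c :: "'a \<Rightarrow> real"
  assumes "finite B" "finite M" "\<forall>f\<in>M. 0 \<le> w f"
    and charge: "\<forall>e\<in>B. \<exists>f\<in>M. R e f \<and> w e \<le> w f"
    and capacity: "\<forall>f\<in>M. card {e\<in>B. R e f} \<le> c f"
  shows "sum w B \<le> (\<Sum>f\<in>M. c f * w f)"
proof -
  obtain g where g: "\<forall>e\<in>B. g e \<in> M \<and> R e (g e) \<and> w e \<le> w (g e)"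
    using bchoice[of B "\<lambda>e f. f \<in> M \<and> R e f \<and> w e \<le> w f"] charge by blast
  have "sum w B \<le> (\<Sum>e\<in>B. w (g e))" using g by (intro sum_mono) blast
  also have "\<dots> = (\<Sum>f\<in>M. \<Sum>e\<in>{e\<in>B. g e = f}. w (g e))"
    using g assms(1,2) by (intro sum.group[symmetric]) auto
  also have "\<dots> = (\<Sum>f\<in>M. card {e\<in>B. g e = f} * w f)" by simp
  also have "\<dots> \<le> (\<Sum>f\<in>M. c f * w f)"
  proof (intro sum_mono mult_right_mono)
    fix f assume "f \<in> M"
    have "card {e\<in>B. g e = f} \<le> card {e\<in>B. R e f}"
      using g assms(1) by (intro card_mono) auto
    then show "card {e\<in>B. g e = f} \<le> c f" using capacity \<open>f \<in> M\<close> by force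
  qed (use assms(3) in blast)
  finally show ?thesis .
qed

lemma matching_Un_avoiding:
  assumes "matching F" "matching M"
  shows "matching (F \<union> {f\<in>M. \<forall>e\<in>F. f \<inter> e = {}})"
  unfolding matching_def
proof (intro ballI impI)
  fix a b assume a: "a \<in> F \<union> {f\<in>M. \<forall>e\<in>F. f \<inter> e = {}}" and b: "b \<in> F \<union> {f\<in>M. \<forall>e\<in>F. f \<inter> e = {}}"
    and "a \<noteq> b"
  consider "a \<in> F" "b \<in> F" | "a \<in> M" "b \<in> M" | "a \<in> F" "b \<inter> a = {}" | "b \<in> F" "a \<inter> b = {}"
    using a b by blast
  then show "a \<inter> b = {}"
    using assms \<open>a \<noteq> b\<close> unfolding matching_def by cases blast+
qed

lemma sum_Un_avoiding_le_opt:
  assumes "finite EH" "F \<subseteq> EH" "M \<subseteq> EH" "matching F" "matching M" "{} \<notin> F"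
  shows "sum w F + sum w {f\<in>M. \<forall>e\<in>F. f \<inter> e = {}} \<le> opt w EH"
proof -
  let ?M' = "{f\<in>M. \<forall>e\<in>F. f \<inter> e = {}}"
  have "F \<inter> ?M' = {}" using assms(6) by (auto simp: Int_absorb)
  moreover have "finite F" "finite ?M'" using assms(1-3) by (auto intro: rev_finite_subset)
  ultimately have "sum w F + sum w ?M' = sum w (F \<union> ?M')" by (simp add: sum.union_disjoint)
  also have "\<dots> \<le> opt w EH"
    using assms(1-3) matching_Un_avoiding[OF assms(4,5)] by (intro sum_le_opt) auto
  finally show ?thesis .
qed

lemma sum_blocked_le:
  fixes w :: "'a set \<Rightarrow> real"
  assumes "is_graph V E" "\<forall>e\<in>E. 0 \<le> w e" "set \<pi> = E"
    and sorted: "sorted_wrt (\<lambda>a b. w a \<ge> w b) \<pi>"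
    and "Ei \<subseteq> E" "matching M" "M \<subseteq> E" "F \<subseteq> free_edges Ei \<pi> M"
  shows "sum w (M - free_edges Ei \<pi> M)
           \<le> sum w (greedy Ei \<pi>) + sum w {f\<in>greedy Ei \<pi>. \<forall>e\<in>F. f \<inter> e = {}}"
proof -
  define G where "G = greedy Ei \<pi>"
  define G' where "G' = {f\<in>G. \<forall>e\<in>F. f \<inter> e = {}}"
  define B where "B = M - free_edges Ei \<pi> M"
  have "finite E" using assms(1) by (rule finite_edges)
  have "G \<subseteq> E" using greedy_subset[of Ei \<pi>] assms(5) unfolding G_def by blast
  have "B \<subseteq> M" unfolding B_def by blast
  have "finite B" "finite G" "\<forall>f\<in>G. 0 \<le> w f"
    using \<open>finite E\<close> assms(2,7) \<open>B \<subseteq> M\<close> \<open>G \<subseteq> E\<close> by (auto intro: rev_finite_subset)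
  moreover have "\<forall>e\<in>B. \<exists>f\<in>G. e \<inter> f \<noteq> {} \<and> w e \<le> w f"
  proof
    fix e assume "e \<in> B"
    then have "e \<in> set \<pi>" using \<open>B \<subseteq> M\<close> assms(3,7) by blast
    from blocking_edge[OF sorted this] \<open>e \<in> B\<close>
    show "\<exists>f\<in>G. e \<inter> f \<noteq> {} \<and> w e \<le> w f" unfolding B_def G_def by blast
  qed
  moreover have "\<forall>f\<in>G. card {e\<in>B. e \<inter> f \<noteq> {}} \<le> (if f \<in> G' then 2 else 1 :: real)"
  proof
    fix f assume "f \<in> G"
    let ?S = "{e\<in>M. e \<inter> f \<noteq> {}}"
    have "card f = 2" using \<open>f \<in> G\<close> \<open>G \<subseteq> E\<close> assms(1) unfolding is_graph_def by blast
    then have "card ?S \<le> 2" using card_matching_meeting_le[OF assms(6), of f] card.infinite by fastforce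
    have "finite ?S" using \<open>finite E\<close> assms(7) by (auto intro: rev_finite_subset)
    have "{e\<in>B. e \<inter> f \<noteq> {}} \<subseteq> ?S" using \<open>B \<subseteq> M\<close> by blast
    show "card {e\<in>B. e \<inter> f \<noteq> {}} \<le> (if f \<in> G' then 2 else 1 :: real)"
    proof (cases "f \<in> G'")
      case True
      then show ?thesis
        using card_mono[OF \<open>finite ?S\<close> \<open>{e\<in>B. e \<inter> f \<noteq> {}} \<subseteq> ?S\<close>] \<open>card ?S \<le> 2\<close> by simp
    next
      case False
      then obtain e' where "e' \<in> F" "e' \<inter> f \<noteq> {}" using \<open>f \<in> G\<close> unfolding G'_def by blast
      then have "{e\<in>B. e \<inter> f \<noteq> {}} \<subseteq> ?S - {e'}"
        using \<open>{e\<in>B. e \<inter> f \<noteq> {}} \<subseteq> ?S\<close> assms(8) unfolding B_def by blast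
      then have "card {e\<in>B. e \<inter> f \<noteq> {}} \<le> card (?S - {e'})"
        using \<open>finite ?S\<close> by (intro card_mono) auto
      also have "\<dots> \<le> 1"
        using \<open>e' \<in> F\<close> \<open>e' \<inter> f \<noteq> {}\<close> assms(8) \<open>card ?S \<le> 2\<close> \<open>finite ?S\<close>
        unfolding free_edges_def by (simp add: subset_iff)
      finally show ?thesis using False by simp
    qed
  qed
  ultimately have "sum w B \<le> (\<Sum>f\<in>G. (if f \<in> G' then 2 else 1) * w f)"
    by (rule sum_le_by_charging)
  also have "\<dots> = (\<Sum>f\<in>G. w f + (if f \<in> G' then w f else 0))"
    by (intro sum.cong) auto
  also have "\<dots> = sum w G + sum w G'"
    using sum.inter_restrict[OF \<open>finite G\<close>, of w G'] unfolding G'_def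
    by (simp add: sum.distrib Int_absorb1)
  finally show ?thesis unfolding B_def G_def G'_def .
qed

theorem lemma3p3:
  fixes V :: "'v set" and E :: "'v set set" and w :: "'v set \<Rightarrow> real"
    and \<pi> :: "'v set list" and k :: nat and Gs :: "nat \<Rightarrow> 'v set set"
    and Mstar :: "'v set set"
  assumes graph: "is_graph V E"
    and nonneg: "\<forall>e\<in>E. w e \<ge> 0"
    and perm: "distinct \<pi>" "set \<pi> = E"
    and sorted: "sorted_wrt (\<lambda>a b. w a \<ge> w b) \<pi>"
    and k: "k \<ge> 1"
    and sub: "\<forall>i\<in>{1..k}. Gs i \<subseteq> E"
    and opt_M: "max_weight_matching w E Mstar"
  shows "let EH = (\<Union>i\<in>{1..k}. greedy (Gs i) \<pi>);
             F1 = {e\<in>Mstar. e \<inter> \<Union>(greedy (Gs 1) (prefix_before \<pi> e)) = {}};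
             B1 = Mstar - F1
         in opt w EH \<ge> (sum w (F1 \<inter> EH) + sum w B1) / 2"
proof -
  define EH where "EH = (\<Union>i\<in>{1..k}. greedy (Gs i) \<pi>)"
  define F1 where "F1 = free_edges (Gs 1) \<pi> Mstar"
  define M1 where "M1 = greedy (Gs 1) \<pi>"
  define M1' where "M1' = {f\<in>M1. \<forall>e\<in>F1 \<inter> EH. f \<inter> e = {}}"
  have "Mstar \<subseteq> E" "matching Mstar" using opt_M unfolding max_weight_matching_def by auto
  have "EH \<subseteq> E" unfolding EH_def using greedy_subset sub by (meson UN_least inf.coboundedI1 subset_trans)
  then have "finite EH" using finite_edges[OF graph] by (rule finite_subset)
  have "Gs 1 \<subseteq> E" using sub k by simp
  have "M1 \<subseteq> EH" using k unfolding EH_def M1_def by (intro UN_upper) simp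
  have "matching M1" unfolding M1_def by (rule matching_greedy)
  have "F1 \<inter> EH \<subseteq> Mstar" unfolding F1_def free_edges_def by blast
  then have "matching (F1 \<inter> EH)" using \<open>matching Mstar\<close> unfolding matching_def by blast
  have "{} \<notin> F1 \<inter> EH"
    using \<open>F1 \<inter> EH \<subseteq> Mstar\<close> \<open>Mstar \<subseteq> E\<close> graph unfolding is_graph_def by fastforce
  have "sum w M1 \<le> opt w EH" using \<open>finite EH\<close> \<open>M1 \<subseteq> EH\<close> \<open>matching M1\<close> by (rule sum_le_opt)
  moreover have "sum w (F1 \<inter> EH) + sum w M1' \<le> opt w EH"
    unfolding M1'_def using \<open>finite EH\<close> Int_lower2 \<open>M1 \<subseteq> EH\<close> \<open>matching (F1 \<inter> EH)\<close> \<open>matching M1\<close>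
      \<open>{} \<notin> F1 \<inter> EH\<close> by (rule sum_Un_avoiding_le_opt)
  moreover have "sum w (Mstar - F1) \<le> sum w M1 + sum w M1'"
    unfolding M1'_def M1_def F1_def
    by (rule sum_blocked_le[OF graph nonneg perm(2) sorted \<open>Gs 1 \<subseteq> E\<close> \<open>matching Mstar\<close>
          \<open>Mstar \<subseteq> E\<close> Int_lower1])
  ultimately have "sum w (F1 \<inter> EH) + sum w (Mstar - F1) \<le> 2 * opt w EH" by linarith
  then have "(sum w (F1 \<inter> EH) + sum w (Mstar - F1)) / 2 \<le> opt w EH" by simp
  then show ?thesis unfolding Let_def EH_def F1_def free_edges_def .
qed

end
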